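(* Let $v\in\mathbb{C}$ and let $S\geq1$ be a fixed integer. Put $\tilde p(z)=1-e^z+z$. As $n\to\infty$, \begin{align*} \int_{-2}^{0}e^{n\tilde p(z)}e^{vz}\,dz&=\sum_{s=0}^{S-1}\Gamma\!\left(\frac{s+1}{2}\right)\frac{(-1)^s\tilde\beta_s(v)}{n^{(s+1)/2}}+O\!\left(\frac{1}{n^{(S+1)/2}}\right),\\ \int_{0}^{2}e^{n\tilde p(z)}e^{vz}\,dz&=\sum_{s=0}^{S-1}\Gamma\!\left(\frac{s+1}{2}\right)\frac{\tilde\beta_s(v)}{n^{(s+1)/2}}+O\!\left(\frac{1}{n^{(S+1)/2}}\right), \end{align*} where \[ \tilde\beta_s(v)=\sum_{m=0}^{s}\frac{v^{s-m}}{(s-m)!}\sum_{k=0}^{m}2^{(s-1)/2+k}\binom{-(s+1)/2}{k}\mathcal{A}_{m,k}\!\left(\tfrac1{3!},\tfrac1{4!},\tfrac1{5!},\dots\right). \]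
   Context: De Moivre polynomial $\mathcal{A}_{n,k}(a_1,a_2,\dots)$: coefficient of $x^n$ in $(a_1x+a_2x^2+\cdots)^k$. $\binom{x}{k}=x(x-1)\cdots(x-k+1)/k!$ for complex $x$. *)

theory Defs
  imports "HOL-Analysis.Analysis" "HOL-Library.Landau_Symbols"
    "HOL-Computational_Algebra.Formal_Power_Series"
begin

text \<open>De Moivre polynomial: coefficient of x^n in (a 1 * x + a 2 * x^2 + ...)^k.
  The sequence a is indexed from 1; the value a 0 is ignored.\<close>
definition demoivre :: "(nat \<Rightarrow> 'a::comm_ring_1) \<Rightarrow> nat \<Rightarrow> nat \<Rightarrow> 'a" where
  "demoivre a n k = fps_nth ((Abs_fps (\<lambda>j. if j = 0 then 0 else a j)) ^ k) n"

definition ptilde :: "real \<Rightarrow> real" where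
  "ptilde z = 1 - exp z + z"

text \<open>beta~_s(v), with coefficients a_j = 1/(j+2)!, i.e. 1/3!, 1/4!, ...\<close>
definition beta_tilde :: "nat \<Rightarrow> complex \<Rightarrow> complex" where
  "beta_tilde s v = (\<Sum>m=0..s. v ^ (s - m) / of_nat (fact (s - m)) *
      complex_of_real (\<Sum>k=0..m. 2 powr ((real s - 1) / 2 + real k)
         * ((- (real s + 1) / 2) gchoose k)
         * demoivre (\<lambda>j. 1 / fact (j + 2)) m k))"

end

theory Submission
  imports Defs "HOL-Complex_Analysis.Complex_Analysis"
begin

text \<open>The substitution \<open>y = u(z)\<close> with \<open>u(z)^2 / 2 = e^z - 1 - z\<close>, i.e.
  \<open>u(z) = z (2 (e^z - 1 - z) / z^2)^(1/2)\<close>, turns \<open>e^(n p(z))\<close> into the Gaussian \<open>e^(-n y^2/2)\<close>.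
  Lagrange inversion writes \<open>e^(vz) = (SUM s<S. c_s u^s u') + O(z^S)\<close> with
  \<open>c_s = [z^s] e^(vz) (z/u)^(s+1)\<close>, and expanding
  \<open>(z/u)^(s+1) = (1 + 2 (z/3! + z^2/4! + ...))^(-(s+1)/2)\<close> by the binomial series shows
  \<open>2^((s-1)/2) c_s = beta_tilde s v\<close>. The term \<open>c_s u^s u'\<close> integrates to a truncated Gaussian moment
  \<open>\<integral>\<^sub>0\<^sup>L e^(-n y^2/2) y^s dy\<close>, which is \<open>2^((s-1)/2) Gamma((s+1)/2) / n^((s+1)/2)\<close> up to an error
  smaller than any power of \<open>n\<close>; since \<open>u(z)^2 \<ge> c z^2\<close>, the remainder contributes
  \<open>O(\<integral> e^(-c n z^2/2) |z|^S dz) = O(n^(-(S+1)/2))\<close>. On \<open>[-2, 0]\<close> the new variable runs over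
  \<open>[u(-2), 0]\<close>, which produces the sign \<open>(-1)^s\<close>.\<close>

section \<open>Lagrange inversion for formal power series\<close>

definition lagrange_coeff :: "'a::field_char_0 fps \<Rightarrow> 'a fps \<Rightarrow> nat \<Rightarrow> 'a" where
  "lagrange_coeff W G s = fps_nth (G * inverse W ^ (s + 1)) s"

lemma fps_deriv_X_mult_times_inverse_power:
  fixes W :: "'a::field_char_0 fps"
  assumes W0: "fps_nth W 0 = 1" and k: "0 < k"
  shows "of_nat k * (fps_deriv (fps_X * W) * inverse W ^ (k + 1))
       = of_nat (k + 1) * inverse W ^ k - fps_deriv (fps_X * inverse W ^ k)"
proof -
  define V where "V = inverse W"
  have VW: "V * W = 1" unfolding V_def using W0 by (simp add: inverse_mult_eq_1)
  have dV: "fps_deriv V = - fps_deriv W * V^2" unfolding V_def using W0 by (simp add: fps_inverse_deriv)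
  have dVk: "fps_deriv (V^k) = of_nat k * fps_deriv V * V^(k-1)" by (rule fps_deriv_power')
  have pk: "V^2 * V^(k-1) = V^(k+1)" using k by (simp add: power_add[symmetric])
  have pk2: "V^(k+1) * W = V^k" using VW by (simp add: mult.assoc mult.commute mult.left_commute)
  have "of_nat k * (fps_deriv (fps_X * W) * V^(k+1))
      = of_nat k * V^k + of_nat k * fps_X * fps_deriv W * V^(k+1)"
    using pk2 by (simp add: algebra_simps)
  also have "\<dots> = of_nat (k+1) * V^k - fps_deriv (fps_X * V^k)"
    using pk by (simp add: dVk dV algebra_simps)
  finally show ?thesis unfolding V_def .
qed

text \<open>With \<open>U = X W\<close>, the coefficient of \<open>X^j\<close> in \<open>U^s U' / W^(j+1)\<close> is the residue of
  \<open>U^(s-j-1) U'\<close>, which vanishes for \<open>s \<noteq> j\<close> because that is a derivative; for \<open>s < j\<close> the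
  previous lemma makes the primitive explicit.\<close>
lemma fps_nth_power_deriv_times_inverse_power:
  fixes W :: "'a::field_char_0 fps"
  assumes W0: "fps_nth W 0 = 1"
  shows "fps_nth ((fps_X * W) ^ s * fps_deriv (fps_X * W) * inverse W ^ (j + 1)) j
           = (if s = j then 1 else 0)"
proof -
  define V where "V = inverse W"
  have VW: "V * W = 1" unfolding V_def using W0 by (simp add: inverse_mult_eq_1)
  have V0: "fps_nth V 0 = 1" unfolding V_def using W0 by simp
  have eq: "(fps_X * W)^s * fps_deriv (fps_X * W) * V^(j+1)
      = fps_X^s * (W^s * fps_deriv (fps_X * W) * V^(j+1))"
    by (simp add: algebra_simps)
  show ?thesis
  proof (cases "j < s")
    case True
    then show ?thesis unfolding V_def[symmetric] eq fps_X_power_mult_nth by simp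
  next
    case False
    define k where "k = j - s"
    have jk: "j + 1 = s + (k + 1)" using False k_def by simp
    have "W^s * fps_deriv (fps_X * W) * V^(j+1) = (V * W)^s * (fps_deriv (fps_X * W) * V^(k+1))"
      unfolding jk power_add power_mult_distrib by (simp add: algebra_simps)
    also have "\<dots> = fps_deriv (fps_X * W) * V^(k+1)" using VW by simp
    finally have e2: "W^s * fps_deriv (fps_X * W) * V^(j+1) = fps_deriv (fps_X * W) * V^(k+1)" .
    show ?thesis
    proof (cases "k = 0")
      case True
      thus ?thesis unfolding V_def[symmetric] eq fps_X_power_mult_nth e2 using False k_def V0 W0
        by (simp add: fps_mult_nth)
    next
      case False
      hence "0 < k" by simp
      have "fps_nth (of_nat k * (fps_deriv (fps_X * W) * V^(k+1))) k = 0"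
        unfolding V_def fps_deriv_X_mult_times_inverse_power[OF W0 \<open>0 < k\<close>]
        by (simp add: fps_of_nat[symmetric] algebra_simps)
      hence "of_nat k * fps_nth (fps_deriv (fps_X * W) * V^(k+1)) k = 0"
        by (simp add: fps_of_nat[symmetric])
      thus ?thesis unfolding V_def[symmetric] eq fps_X_power_mult_nth e2 using False k_def
        by simp
    qed
  qed
qed

lemma fps_nth_sub_lagrange_sum:
  fixes W G :: "'a::field_char_0 fps"
  assumes W0: "fps_nth W 0 = 1" and "j < S"
  shows "fps_nth (G - (\<Sum>s<S. fps_const (lagrange_coeff W G s) *
                        ((fps_X * W) ^ s * fps_deriv (fps_X * W)))) j = 0"
  using \<open>j < S\<close>
proof (induction j rule: less_induct)
  case (less j)
  define D where
    "D = G - (\<Sum>s<S. fps_const (lagrange_coeff W G s) * ((fps_X * W)^s * fps_deriv (fps_X * W)))"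
  define V where "V = inverse W"
  have V0: "fps_nth V 0 = 1" unfolding V_def using W0 by simp
  have DV: "D * V^(j+1) = G * V^(j+1) - (\<Sum>s<S. fps_const (lagrange_coeff W G s) *
                        ((fps_X * W)^s * fps_deriv (fps_X * W) * V^(j+1)))"
    unfolding D_def by (simp add: sum_distrib_right left_diff_distrib mult.assoc)
  have "fps_nth (D * V^(j+1)) j
      = lagrange_coeff W G j - (\<Sum>s<S. lagrange_coeff W G s * (if s = j then 1 else 0))"
    unfolding DV fps_sub_nth fps_sum_nth fps_mult_left_const_nth
    unfolding V_def fps_nth_power_deriv_times_inverse_power[OF W0]
    by (simp add: lagrange_coeff_def)
  also have "\<dots> = lagrange_coeff W G j - (\<Sum>s<S. if s = j then lagrange_coeff W G s else 0)"
    by (intro arg_cong2[where f="(-)"] refl sum.cong) auto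
  also have "\<dots> = 0" using less.prems by simp
  finally have coeff_j: "fps_nth (D * V^(j+1)) j = 0" .
  have "fps_nth (D * V^(j+1)) j = (\<Sum>i=0..j. fps_nth D i * fps_nth (V^(j+1)) (j - i))"
    by (rule fps_mult_nth)
  also have "\<dots> = (\<Sum>i\<in>{j}. fps_nth D i * fps_nth (V^(j+1)) (j - i))"
    using less.IH less.prems unfolding D_def by (intro sum.mono_neutral_right) auto
  also have "\<dots> = fps_nth D j" using V0 by (simp add: fps_nth_power_0)
  finally show ?case using coeff_j unfolding D_def by simp
qed

section \<open>The coefficients of the expansion\<close>

lemma inverse_power_fps_binomial_compose:
  fixes H :: "'a::field_char_0 fps"
  assumes "fps_nth H 0 = 0"
  shows "inverse (fps_binomial a oo H) ^ k = fps_binomial (- of_nat k * a) oo H"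
proof -
  have "(fps_binomial a oo H) ^ k * (fps_binomial (- of_nat k * a) oo H) = 1"
    using assms by (simp add: fps_compose_power fps_binomial_power
        fps_compose_mult_distrib[symmetric] fps_binomial_add_mult[symmetric])
  hence "inverse ((fps_binomial a oo H) ^ k) = fps_binomial (- of_nat k * a) oo H"
    by (rule fps_inverse_unique)
  thus ?thesis by (simp only: fps_inverse_power)
qed

lemma demoivre_of_real:
  fixes a :: "nat \<Rightarrow> real"
  shows "demoivre (\<lambda>j. of_real (a j) :: 'a::{real_algebra_1, comm_ring_1}) n k
           = of_real (demoivre a n k)"
proof (induction k arbitrary: n)
  case (Suc k)
  thus ?case
    unfolding demoivre_def power_Suc fps_mult_nth of_real_sum
    by (intro sum.cong) auto
qed (simp add: demoivre_def)

lemma of_real_gbinomial: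
  "of_real (a gchoose k) = (of_real a gchoose k :: 'a::{real_field, field_char_0})"
  by (simp add: gbinomial_prod_rev)

definition exp_quotient_fps :: "complex fps" where
  "exp_quotient_fps = fps_const 2 * fps_shift 2 (fps_exp 1 - 1 - fps_X)"

definition sqrt_exp_quotient_fps :: "complex fps" where
  "sqrt_exp_quotient_fps = fps_binomial (1/2) oo (exp_quotient_fps - 1)"

lemma exp_quotient_fps_minus_one:
  "exp_quotient_fps - 1 = fps_const 2 * Abs_fps (\<lambda>j. if j = 0 then 0 else 1 / fact (j + 2))"
  by (auto simp: fps_eq_iff exp_quotient_fps_def field_simps)

lemma fps_nth_power_exp_quotient_fps_minus_one:
  "fps_nth ((exp_quotient_fps - 1) ^ k) m = 2 ^ k * of_real (demoivre (\<lambda>j. 1 / fact (j + 2)) m k)"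
proof -
  have "of_real (fact n) = (fact n :: complex)" for n
    by (metis of_nat_fact of_real_of_nat_eq)
  hence "demoivre (\<lambda>j. 1 / fact (j + 2)) m k
      = (of_real (demoivre (\<lambda>j. 1 / fact (j + 2)) m k) :: complex)"
    using demoivre_of_real[where 'a=complex, of "\<lambda>j. 1 / fact (j + 2)" m k]
    by (simp add: of_real_divide del: fact_Suc)
  thus ?thesis
    unfolding exp_quotient_fps_minus_one power_mult_distrib fps_const_power
      fps_mult_left_const_nth demoivre_def[symmetric]
    by simp
qed

lemma beta_tilde_eq_lagrange_coeff:
  "beta_tilde s v
     = of_real (2 powr ((real s - 1) / 2)) * lagrange_coeff sqrt_exp_quotient_fps (fps_exp v) s"
proof -
  define a where "a = - (real s + 1) / 2"
  have "fps_nth (exp_quotient_fps - 1) 0 = 0"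
    by (simp add: exp_quotient_fps_minus_one)
  hence "inverse sqrt_exp_quotient_fps ^ (s + 1) = fps_binomial (of_real a) oo (exp_quotient_fps - 1)"
    unfolding sqrt_exp_quotient_fps_def
    by (subst inverse_power_fps_binomial_compose) (simp_all add: a_def field_simps)
  hence "lagrange_coeff sqrt_exp_quotient_fps (fps_exp v) s
      = fps_nth ((fps_binomial (of_real a) oo (exp_quotient_fps - 1)) * fps_exp v) s"
    unfolding lagrange_coeff_def by (simp add: mult.commute)
  also have "\<dots> = (\<Sum>m=0..s. (\<Sum>k=0..m. of_real (a gchoose k) * 2 ^ k
                    * of_real (demoivre (\<lambda>j. 1 / fact (j + 2)) m k)) * (v ^ (s - m) / fact (s - m)))"
    by (simp add: fps_mult_nth fps_compose_nth fps_nth_power_exp_quotient_fps_minus_one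
        of_real_gbinomial mult.assoc)
  finally have coeff: "lagrange_coeff sqrt_exp_quotient_fps (fps_exp v) s = \<dots>" .
  have inner: "of_real (2 powr ((real s - 1) / 2)) * (\<Sum>k=0..m. of_real (a gchoose k) * 2 ^ k
                  * of_real (demoivre (\<lambda>j. 1 / fact (j + 2)) m k))
      = complex_of_real (\<Sum>k=0..m. 2 powr ((real s - 1) / 2 + real k) * (a gchoose k)
                  * demoivre (\<lambda>j. 1 / fact (j + 2)) m k)" for m
    unfolding sum_distrib_left of_real_sum
    by (intro sum.cong refl) (simp add: powr_add powr_realpow)
  show ?thesis
    unfolding beta_tilde_def coeff sum_distrib_left a_def[symmetric]
    by (intro sum.cong refl) (subst inner[symmetric], simp add: mult_ac)
qed

section \<open>The Morse substitution\<close>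

lemma add_one_less_exp:
  fixes x :: real
  assumes "x \<noteq> 0"
  shows "1 + x < exp x"
proof (cases "1 + x / 2 \<ge> 0")
  case True
  have "(1 + x/2)^2 \<le> exp (x/2) ^ 2"
    using True by (intro power_mono) auto
  also have "exp (x/2) ^ 2 = exp x" by (simp add: exp_double[symmetric])
  finally have "1 + x + x^2/4 \<le> exp x" by (simp add: power2_eq_square field_simps)
  moreover have "x^2/4 > 0" using \<open>x \<noteq> 0\<close> by simp
  ultimately show ?thesis by linarith
next
  case False
  hence "1 + x < 0" by simp
  thus ?thesis using exp_gt_zero[of x] by linarith
qed

lemma fps_conv_radius_exp_minus_one_minus_X:
  "fps_conv_radius (fps_exp (1::complex) - 1 - fps_X) = \<infinity>"
  using fps_conv_radius_diff[of "fps_exp (1::complex)" 1]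
    fps_conv_radius_diff[of "fps_exp (1::complex) - 1" fps_X] by (simp add: top_unique)

lemma fps_conv_radius_exp_quotient_fps: "fps_conv_radius exp_quotient_fps = \<infinity>"
  by (simp add: exp_quotient_fps_def fps_conv_radius_cmult_left
      fps_conv_radius_exp_minus_one_minus_X)

definition exp_quotient :: "complex \<Rightarrow> complex" where
  "exp_quotient = eval_fps exp_quotient_fps"

lemma exp_quotient_eq: "z \<noteq> 0 \<Longrightarrow> exp_quotient z = 2 * (exp z - 1 - z) / z ^ 2"
proof -
  assume "z \<noteq> 0"
  define F :: "complex fps" where "F = fps_exp 1 - 1 - fps_X"
  have F_radius: "fps_conv_radius F = \<infinity>"
    unfolding F_def by (rule fps_conv_radius_exp_minus_one_minus_X)
  have "subdegree F \<ge> 2"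
  proof (rule subdegree_geI)
    have "fps_nth F 2 \<noteq> 0" by (simp add: F_def)
    thus "F \<noteq> 0" by auto
    fix i :: nat assume "i < 2"
    hence "i = 0 \<or> i = 1" by auto
    thus "fps_nth F i = 0" by (auto simp: F_def)
  qed
  have "eval_fps F z = exp z - 1 - z"
    unfolding F_def
    by (subst eval_fps_diff, use fps_conv_radius_diff[of "fps_exp (1::complex)" 1] in \<open>simp_all\<close>)+
  moreover have "exp_quotient z = 2 * eval_fps (fps_shift 2 F) z"
    unfolding exp_quotient_def exp_quotient_fps_def F_def[symmetric]
    by (subst eval_fps_mult) (simp_all add: F_radius)
  ultimately show ?thesis
    using \<open>z \<noteq> 0\<close> \<open>subdegree F \<ge> 2\<close> by (simp add: eval_fps_shift F_radius)
qed

lemma exp_quotient_has_fps_expansion: "exp_quotient has_fps_expansion exp_quotient_fps"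
  unfolding exp_quotient_def
  by (rule eval_fps_has_fps_expansion) (simp add: fps_conv_radius_exp_quotient_fps)

lemma exp_quotient_analytic: "exp_quotient analytic_on A"
  unfolding exp_quotient_def
  by (rule FPS_Convergence.analytic_on_eval_fps) (simp add: fps_conv_radius_exp_quotient_fps)

definition exp_quotient_real :: "real \<Rightarrow> real" where
  "exp_quotient_real x = (if x = 0 then 1 else 2 * (exp x - 1 - x) / x ^ 2)"

lemma exp_quotient_real_pos: "exp_quotient_real x > 0"
  using add_one_less_exp[of x] by (auto simp: exp_quotient_real_def)

lemma exp_quotient_of_real: "exp_quotient (of_real x) = of_real (exp_quotient_real x)"
proof (cases "x = 0")
  case True
  thus ?thesis
    by (simp add: exp_quotient_def exp_quotient_real_def eval_fps_at_0 exp_quotient_fps_def)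
qed (simp add: exp_quotient_eq exp_quotient_real_def exp_of_real[symmetric])

lemma continuous_on_exp_quotient_real: "continuous_on A exp_quotient_real"
proof -
  have "continuous_on A (\<lambda>x. Re (exp_quotient (of_real x)))"
    by (intro continuous_intros continuous_on_compose2[OF holomorphic_on_imp_continuous_on,
          OF analytic_imp_holomorphic, OF exp_quotient_analytic]) auto
  thus ?thesis by (simp add: exp_quotient_of_real)
qed

text \<open>The Morse-lemma coordinate of \<open>ptilde\<close> at its critical point 0:
  \<open>ptilde = - morse\<^sup>2 / 2\<close> on the reals.\<close>
definition morse :: "complex \<Rightarrow> complex" where
  "morse z = z * exp_quotient z powr (1/2)"

definition morse_real :: "real \<Rightarrow> real" where
  "morse_real x = x * sqrt (exp_quotient_real x)"

lemma morse_of_real: "morse (of_real x) = of_real (morse_real x)"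
proof -
  have "exp_quotient (of_real x) powr (1/2) = of_real (exp_quotient_real x powr (1/2))"
    using exp_quotient_real_pos[of x] unfolding exp_quotient_of_real
    by (subst powr_of_real[symmetric]) simp_all
  thus ?thesis
    using exp_quotient_real_pos[of x] by (simp add: morse_def morse_real_def powr_half_sqrt)
qed

lemma morse_real_sq: "morse_real x ^ 2 = x ^ 2 * exp_quotient_real x"
  using exp_quotient_real_pos[of x] by (simp add: morse_real_def power_mult_distrib)

lemma ptilde_eq_morse_real: "ptilde x = - (morse_real x ^ 2) / 2"
  by (auto simp: morse_real_sq exp_quotient_real_def ptilde_def field_simps)

lemma sgn_morse_real: "sgn (morse_real x) = sgn x"
  using exp_quotient_real_pos[of x] by (simp add: morse_real_def sgn_mult)

lemma morse_analytic: "morse analytic_on \<real>"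
proof -
  have "(\<lambda>z. exp_quotient z powr (1/2)) analytic_on \<real>"
  proof (rule analytic_on_powr)
    fix z :: complex assume "z \<in> \<real>"
    then obtain x where "z = of_real x" by (auto elim: Reals_cases)
    thus "exp_quotient z \<notin> \<real>\<^sub>\<le>\<^sub>0"
      using exp_quotient_real_pos[of x] by (auto simp: exp_quotient_of_real nonpos_Reals_def)
  qed (auto intro: exp_quotient_analytic analytic_intros)
  thus ?thesis unfolding morse_def by (intro analytic_on_mult analytic_on_ident)
qed

lemma morse_has_fps_expansion: "morse has_fps_expansion fps_X * sqrt_exp_quotient_fps"
proof -
  have "(\<lambda>z. exp_quotient z - 1) has_fps_expansion exp_quotient_fps - 1"
    by (intro fps_expansion_intros exp_quotient_has_fps_expansion)
  from has_fps_expansion_compose[OF has_fps_expansion_binomial_complex this]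
  have "(\<lambda>z. exp_quotient z powr (1/2)) has_fps_expansion sqrt_exp_quotient_fps"
    by (simp add: sqrt_exp_quotient_fps_def exp_quotient_fps_minus_one o_def)
  thus ?thesis
    unfolding morse_def by (intro fps_expansion_intros)
qed

definition morse_real_deriv :: "real \<Rightarrow> real" where
  "morse_real_deriv x = Re (deriv morse (of_real x))"

lemma morse_has_vector_derivative:
  "((\<lambda>t. morse (of_real t)) has_vector_derivative deriv morse (of_real x)) (at x)"
  using morse_analytic
  by (intro has_vector_derivative_real_field DERIV_deriv_iff_field_differentiable[THEN iffD2]
        analytic_on_imp_differentiable_at) auto

lemma deriv_morse_of_real: "deriv morse (of_real x) = of_real (morse_real_deriv x)"
proof -
  have "((\<lambda>t. Im (morse (of_real t))) has_field_derivative Im (deriv morse (of_real x))) (at x)"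
    by (rule has_field_derivative_Im[OF morse_has_vector_derivative])
  moreover have "((\<lambda>t. Im (morse (of_real t))) has_field_derivative 0) (at x)"
    by (simp add: morse_of_real)
  ultimately have "Im (deriv morse (of_real x)) = 0" by (rule DERIV_unique)
  thus ?thesis unfolding morse_real_deriv_def by (simp add: complex_eq_iff)
qed

lemma morse_real_has_real_derivative: "(morse_real has_real_derivative morse_real_deriv x) (at x)"
  using has_field_derivative_Re[OF morse_has_vector_derivative]
  by (simp add: morse_of_real morse_real_deriv_def)

lemma continuous_on_morse_real: "continuous_on A morse_real"
  using morse_real_has_real_derivative by (meson DERIV_isCont continuous_at_imp_continuous_on)

lemma morse_real_sq_lower_bound: "compact K \<Longrightarrow> \<exists>c>0. \<forall>x\<in>K. c * x ^ 2 \<le> morse_real x ^ 2"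
proof (cases "K = {}")
  case False
  assume "compact K"
  then obtain x0 where "x0 \<in> K" and min: "\<And>y. y \<in> K \<Longrightarrow> exp_quotient_real x0 \<le> exp_quotient_real y"
    using continuous_attains_inf[OF _ False continuous_on_exp_quotient_real] by blast
  show ?thesis
    using exp_quotient_real_pos[of x0] min
    by (intro exI[of _ "exp_quotient_real x0"])
       (auto simp: morse_real_sq mult.commute[of _ "x^2" for x] intro!: mult_left_mono)
qed (auto intro: exI[of _ 1])

section \<open>The remainder of the expansion\<close>

lemma has_fps_expansion_imp_bigo_power:
  fixes f :: "'a::{banach, real_normed_field} \<Rightarrow> 'a"
  assumes f: "f has_fps_expansion F" and F: "\<And>j. j < S \<Longrightarrow> fps_nth F j = 0"
  shows "f \<in> O[nhds 0](\<lambda>z. z ^ S)"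
proof -
  define E where "E = fps_shift S F"
  have F_eq: "F = fps_X ^ S * E"
    by (auto simp: fps_eq_iff fps_X_power_mult_nth E_def F)
  have R: "fps_conv_radius F > 0" and ev: "eventually (\<lambda>z. eval_fps F z = f z) (nhds 0)"
    using f by (auto simp: has_fps_expansion_def)
  have "eventually (\<lambda>z. z \<in> eball 0 (fps_conv_radius F)) (nhds 0)"
    using R by (intro eventually_nhds_in_open) (auto simp: zero_ereal_def)
  with ev have eq: "eventually (\<lambda>z. f z = z ^ S * eval_fps E z) (nhds 0)"
  proof eventually_elim
    case (elim z)
    hence "f z = eval_fps (fps_X ^ S * E) z" by (simp flip: F_eq)
    also have "\<dots> = z ^ S * eval_fps E z"
      using elim by (subst eval_fps_mult) (auto simp: E_def)
    finally show ?case .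
  qed
  have "isCont (eval_fps E) 0"
    using R by (intro continuous_eval_fps) (auto simp: E_def zero_ereal_def)
  hence "((\<lambda>z. norm (eval_fps E z)) \<longlongrightarrow> norm (eval_fps E 0)) (nhds 0)"
    by (intro tendsto_norm) (simp add: tendsto_nhds_iff isCont_def)
  hence "eventually (\<lambda>z. norm (eval_fps E z) < norm (eval_fps E 0) + 1) (nhds 0)"
    by (rule order_tendstoD) simp
  with eq have "eventually (\<lambda>z. norm (f z) \<le> (norm (eval_fps E 0) + 1) * norm (z ^ S)) (nhds 0)"
  proof eventually_elim
    case (elim z)
    have "norm (f z) = norm (z ^ S) * norm (eval_fps E z)" using elim(1) by (simp add: norm_mult)
    also have "\<dots> \<le> norm (z ^ S) * (norm (eval_fps E 0) + 1)" using elim(2) by (intro mult_left_mono) auto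
    finally show ?case by (simp add: mult.commute)
  qed
  thus ?thesis by (rule bigoI)
qed

lemma bigo_power_imp_bound_on_compact:
  fixes f :: "'a::real_normed_field \<Rightarrow> 'a"
  assumes "f \<in> O[nhds 0](\<lambda>z. z ^ S)" "compact K" "continuous_on K f"
  shows "\<exists>M. \<forall>z\<in>K. norm (f z) \<le> M * norm z ^ S"
proof -
  obtain c where "c > 0" "eventually (\<lambda>z. norm (f z) \<le> c * norm (z ^ S)) (nhds 0)"
    using assms(1) by (elim landau_o.bigE)
  then obtain r where r: "r > 0" and near: "\<And>z. norm z < r \<Longrightarrow> norm (f z) \<le> c * norm z ^ S"
    unfolding eventually_nhds_metric by (auto simp: dist_norm norm_power)
  have "bounded (f ` K)"
    using assms(2,3) by (intro compact_imp_bounded compact_continuous_image)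
  then obtain B where B: "\<And>z. z \<in> K \<Longrightarrow> norm (f z) \<le> B"
    unfolding bounded_iff by blast
  define M where "M = max c (max B 0 / r ^ S)"
  have "norm (f z) \<le> M * norm z ^ S" if "z \<in> K" for z
  proof (cases "norm z < r")
    case True
    hence "norm (f z) \<le> c * norm z ^ S" by (rule near)
    also have "\<dots> \<le> M * norm z ^ S" unfolding M_def by (intro mult_right_mono) auto
    finally show ?thesis .
  next
    case False
    have "norm (f z) \<le> max B 0 / r ^ S * r ^ S" using B[OF that] r by simp
    also have "\<dots> \<le> M * norm z ^ S"
      unfolding M_def using False r \<open>c > 0\<close> by (intro mult_mono power_mono) auto
    finally show ?thesis .
  qed
  thus ?thesis by blast
qed

text \<open>The coefficients are those of Lagrange inversion, so the remainder vanishes to order \<open>S\<close>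
  at 0.\<close>
definition laplace_remainder :: "complex \<Rightarrow> nat \<Rightarrow> complex \<Rightarrow> complex" where
  "laplace_remainder v S z = exp (v * z)
     - (\<Sum>s<S. lagrange_coeff sqrt_exp_quotient_fps (fps_exp v) s * (morse z ^ s * deriv morse z))"

lemma laplace_remainder_bigo: "laplace_remainder v S \<in> O[nhds 0](\<lambda>z. z ^ S)"
proof (rule has_fps_expansion_imp_bigo_power)
  let ?U = "fps_X * sqrt_exp_quotient_fps"
  show "laplace_remainder v S has_fps_expansion fps_exp v
          - (\<Sum>s<S. fps_const (lagrange_coeff sqrt_exp_quotient_fps (fps_exp v) s)
                     * (?U ^ s * fps_deriv ?U))"
    unfolding laplace_remainder_def
    by (intro has_fps_expansion_diff has_fps_expansion_exp has_fps_expansion_sum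
          has_fps_expansion_cmult_left has_fps_expansion_mult has_fps_expansion_power
          morse_has_fps_expansion has_fps_expansion_deriv)
  have "fps_nth sqrt_exp_quotient_fps 0 = 1"
    by (simp add: sqrt_exp_quotient_fps_def)
  thus "fps_nth (fps_exp v - (\<Sum>s<S. fps_const (lagrange_coeff sqrt_exp_quotient_fps (fps_exp v) s)
                     * (?U ^ s * fps_deriv ?U))) j = 0" if "j < S" for j
    using that by (rule fps_nth_sub_lagrange_sum)
qed

lemma laplace_remainder_analytic: "laplace_remainder v S analytic_on \<real>"
  unfolding laplace_remainder_def by (intro analytic_intros morse_analytic)

lemma continuous_on_laplace_remainder: "continuous_on \<real> (laplace_remainder v S)"
  by (intro holomorphic_on_imp_continuous_on analytic_imp_holomorphic laplace_remainder_analytic)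

lemma laplace_remainder_bound:
  "\<exists>M. \<forall>x\<in>{a..b}. norm (laplace_remainder v S (of_real x)) \<le> M * \<bar>x\<bar> ^ S"
proof -
  have "\<exists>M. \<forall>z\<in>of_real ` {a..b}. norm (laplace_remainder v S z) \<le> M * norm z ^ S"
  proof (rule bigo_power_imp_bound_on_compact[OF laplace_remainder_bigo])
    show "compact (complex_of_real ` {a..b})"
      by (intro compact_continuous_image continuous_intros) auto
    show "continuous_on (complex_of_real ` {a..b}) (laplace_remainder v S)"
      by (rule continuous_on_subset[OF continuous_on_laplace_remainder]) auto
  qed
  thus ?thesis by auto
qed

section \<open>Gaussian moments\<close>

lemma has_integral_sqrt_substitution:
  fixes f :: "real \<Rightarrow> real" and lam L :: real
  assumes lam: "lam > 0" and L: "L > 0" and f: "continuous_on {0..L} f"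
  shows "((\<lambda>t. (if t = 0 then 0 else 1 / (2 * sqrt (lam * t))) * f (sqrt (t / lam)))
            has_integral integral {0..L} f) {0..lam * L ^ 2}"
proof -
  define T where "T = lam * L ^ 2"
  define g where "g = (\<lambda>t::real. sqrt (t / lam))"
  define g' where "g' = (\<lambda>t::real. if t = 0 then 0 else 1 / (2 * sqrt (lam * t)))"
  have T: "T > 0" unfolding T_def using lam L by simp
  have gT: "g T = L" and g0: "g 0 = 0" unfolding g_def T_def using lam L by simp_all
  have "((\<lambda>t. g' t *\<^sub>R f (g t)) has_integral integral {g 0..g T} f) {0..T}"
  proof (rule has_integral_substitution_strong[of "{0}" 0 T g 0 L f g'])
    show "g ` {0..T} \<subseteq> {0..L}"
    proof
      fix y assume "y \<in> g ` {0..T}"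
      then obtain t where t: "t \<in> {0..T}" "y = g t" by auto
      have "sqrt (t / lam) \<le> sqrt (T / lam)"
        using t lam by (intro real_sqrt_le_mono divide_right_mono) auto
      thus "y \<in> {0..L}" using t gT lam unfolding g_def by auto
    qed
    show "continuous_on {0..T} g" unfolding g_def using lam by (intro continuous_intros) auto
    fix x assume "x \<in> {0..T} - {0}"
    hence x: "x > 0" by auto
    have "((\<lambda>t. sqrt (t / lam)) has_real_derivative (inverse (sqrt (x / lam)) / 2 * (1 / lam))) (at x)"
      using x lam by (auto intro!: derivative_eq_intros simp: divide_less_0_iff)
    moreover have "inverse (sqrt (x / lam)) / 2 * (1 / lam) = g' x"
      using x lam unfolding g'_def by (simp add: real_sqrt_divide real_sqrt_mult field_simps)
    ultimately show "(g has_real_derivative g' x) (at x within {0..T})"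
      unfolding g_def by (simp add: has_field_derivative_at_within)
  qed (use T L f g0 gT in simp_all)
  thus ?thesis unfolding g0 gT by (simp add: g_def g'_def T_def)
qed

lemma gaussian_moment_lower_gamma:
  fixes lam L :: real and s :: nat
  assumes lam: "lam > 0" and L: "L > 0"
  defines "a \<equiv> (real s + 1) / 2"
  shows "((\<lambda>t. t powr (a - 1) / exp t) has_integral
           2 * lam powr a * integral {0..L} (\<lambda>y. exp (- lam * y ^ 2) * y ^ s)) {0..lam * L ^ 2}"
proof -
  define f where "f = (\<lambda>y::real. exp (- lam * y ^ 2) * y ^ s)"
  have "(if t = 0 then 0 else 1 / (2 * sqrt (lam * t))) * f (sqrt (t / lam))
          = t powr (a - 1) / exp t / (2 * lam powr a)" if "t \<in> {0..lam * L ^ 2}" for t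
  proof (cases "t = 0")
    case False
    with that have t: "t > 0" by auto
    have "sqrt (t / lam) ^ s = t powr (real s / 2) / lam powr (real s / 2)"
      using t lam by (simp add: powr_half_sqrt[symmetric] powr_realpow[symmetric] powr_powr powr_divide)
    moreover have "sqrt (lam * t) = lam powr (1/2) * t powr (1/2)"
      using t lam by (simp add: powr_half_sqrt real_sqrt_mult)
    moreover have "t powr (a - 1) = t powr (real s / 2) / t powr (1/2)"
      and "lam powr a = lam powr (real s / 2) * lam powr (1/2)"
      using t lam by (simp_all add: a_def powr_add[symmetric] powr_diff[symmetric] field_simps)
    ultimately show ?thesis
      using t lam unfolding f_def by (simp add: power2_eq_square exp_minus field_simps)
  qed (simp add: a_def)
  moreover have "continuous_on {0..L} f" unfolding f_def by (intro continuous_intros)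
  ultimately have "((\<lambda>t. t powr (a - 1) / exp t / (2 * lam powr a)) has_integral integral {0..L} f)
                     {0..lam * L ^ 2}"
    by (intro has_integral_eq[OF _ has_integral_sqrt_substitution[OF lam L]])
  from has_integral_mult_right[OF this, of "2 * lam powr a"]
  show ?thesis
    using lam unfolding f_def by simp
qed

lemma gaussian_moment_error_bounds:
  fixes lam L :: real and s k :: nat
  assumes lam: "lam > 0" and L: "L > 0"
  defines "a \<equiv> (real s + 1) / 2" and "I \<equiv> integral {0..L} (\<lambda>y. exp (- lam * y ^ 2) * y ^ s)"
  shows "0 \<le> Gamma a - 2 * lam powr a * I"
    and "Gamma a - 2 * lam powr a * I \<le> Gamma (a + real k) / (lam * L ^ 2) ^ k"
proof -
  define T where "T = lam * L ^ 2"
  define h where "h = (\<lambda>t::real. t powr (a - 1) / exp t)"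
  have a: "a > 0" and T: "T > 0" unfolding a_def T_def using lam L by simp_all
  have "(h has_integral 2 * lam powr a * I) {0..T}"
    unfolding h_def T_def a_def I_def by (rule gaussian_moment_lower_gamma[OF lam L])
  hence "((\<lambda>t. if t \<in> {0..T} then h t else 0) has_integral 2 * lam powr a * I) {0..}"
    by (subst has_integral_restrict) auto
  with Gamma_integral_real[OF a]
  have tail: "((\<lambda>t. h t - (if t \<in> {0..T} then h t else 0)) has_integral
                 Gamma a - 2 * lam powr a * I) {0..}"
    unfolding h_def by (rule has_integral_diff)
  show "0 \<le> Gamma a - 2 * lam powr a * I"
    by (rule has_integral_le[OF has_integral_0 tail]) (auto simp: h_def)
  have "((\<lambda>t. t powr (a + real k - 1) / exp t / T ^ k) has_integral Gamma (a + real k) / T ^ k) {0..}"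
    using has_integral_mult_left[OF Gamma_integral_real[of "a + real k"], of "1 / T ^ k"] a by simp
  thus "Gamma a - 2 * lam powr a * I \<le> Gamma (a + real k) / (lam * L ^ 2) ^ k"
    unfolding T_def[symmetric]
  proof (rule has_integral_le[OF tail])
    fix t :: real assume "t \<in> {0..}"
    show "h t - (if t \<in> {0..T} then h t else 0) \<le> t powr (a + real k - 1) / exp t / T ^ k"
    proof (cases "t \<le> T")
      case False
      hence t: "t > 0" using T by simp
      have "h t * T ^ k \<le> h t * t ^ k"
        using False T by (intro mult_left_mono power_mono) (auto simp: h_def)
      also have "\<dots> = t powr (a + real k - 1) / exp t"
        unfolding h_def using t by (simp add: powr_add powr_realpow[symmetric] powr_diff)
      finally show ?thesis using False T by (simp add: field_simps)
    qed (use \<open>t \<in> {0..}\<close> T in auto)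
  qed
qed

lemma gaussian_moment_error_le:
  fixes x L :: real and s k :: nat
  assumes x: "x > 0" and L: "L > 0"
  defines "a \<equiv> (real s + 1) / 2"
  shows "\<bar>integral {0..L} (\<lambda>y. exp (- (x / 2) * y ^ 2) * y ^ s) - 2 powr (a - 1) * Gamma a / x powr a\<bar>
           \<le> 2 powr (a - 1) * Gamma (a + real k) * (2 / L ^ 2) ^ k / x powr (a + real k)"
proof -
  define lam where "lam = x / 2"
  define I where "I = integral {0..L} (\<lambda>y. exp (- lam * y ^ 2) * y ^ s)"
  define e where "e = Gamma a - 2 * lam powr a * I"
  have lam: "lam > 0" using x unfolding lam_def by simp
  have e0: "0 \<le> e" and e1: "e \<le> Gamma (a + real k) / (lam * L ^ 2) ^ k"
    using gaussian_moment_error_bounds(1)[OF lam L, of s]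
      gaussian_moment_error_bounds(2)[OF lam L, of s k]
    unfolding e_def I_def a_def by auto
  have "2 * lam powr a = x powr a / 2 powr (a - 1)"
    unfolding lam_def using x by (simp add: powr_divide powr_diff)
  hence "2 powr (a - 1) * Gamma a / x powr a - I = e * 2 powr (a - 1) / x powr a"
    using x unfolding e_def by (simp add: field_simps)
  hence "\<bar>I - 2 powr (a - 1) * Gamma a / x powr a\<bar> = e * 2 powr (a - 1) / x powr a"
    using e0 x by (subst abs_minus_commute) simp
  also have "\<dots> \<le> Gamma (a + real k) / (lam * L ^ 2) ^ k * 2 powr (a - 1) / x powr a"
    using e1 x by (intro divide_right_mono mult_right_mono) auto
  also have "\<dots> = 2 powr (a - 1) * Gamma (a + real k) * (2 / L ^ 2) ^ k / (x powr a * x ^ k)"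
    unfolding lam_def using L by (simp add: power_mult_distrib field_simps)
  also have "x powr a * x ^ k = x powr (a + real k)"
    using x by (simp add: powr_add powr_realpow)
  finally show ?thesis unfolding I_def lam_def .
qed

lemma gaussian_moment_bigo:
  fixes L p :: real and s :: nat
  assumes L: "L > 0"
  shows "(\<lambda>n::nat. integral {0..L} (\<lambda>y. exp (- (real n / 2) * y ^ 2) * y ^ s)
            - 2 powr ((real s - 1) / 2) * Gamma ((real s + 1) / 2) / real n powr ((real s + 1) / 2))
         \<in> O(\<lambda>n. 1 / real n powr p)"
proof -
  define a where "a = (real s + 1) / 2"
  define k where "k = nat \<lceil>p\<rceil>"
  define C where "C = 2 powr (a - 1) * Gamma (a + real k) * (2 / L ^ 2) ^ k"
  have a: "a > 0" and a1: "(real s - 1) / 2 = a - 1" unfolding a_def by (simp_all add: field_simps)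
  have "\<bar>integral {0..L} (\<lambda>y. exp (- (real n / 2) * y ^ 2) * y ^ s)
            - 2 powr (a - 1) * Gamma a / real n powr a\<bar> \<le> C / real n powr p"
    if n: "n \<ge> 1" for n :: nat
  proof -
    have "real n powr p \<le> real n powr (a + real k)"
      using n a real_nat_ceiling_ge[of p] by (intro powr_mono) (auto simp: k_def)
    moreover have "0 \<le> C" unfolding C_def using a by (auto intro!: Gamma_real_pos less_imp_le)
    ultimately have "C / real n powr (a + real k) \<le> C / real n powr p"
      using n by (intro divide_left_mono) auto
    with gaussian_moment_error_le[of "real n" L s k] n L show ?thesis
      unfolding C_def a_def by simp
  qed
  thus ?thesis
    unfolding a_def[symmetric] a1 by (intro bigoI[of _ C] eventually_sequentiallyI[of 1]) auto
qed

lemma integral_gaussian_abs_moment_le: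
  fixes lam a b :: real and S :: nat
  assumes lam: "lam > 0"
  shows "integral {a..b} (\<lambda>z. exp (- lam * z ^ 2) * \<bar>z\<bar> ^ S)
           \<le> Gamma ((real S + 1) / 2) / lam powr ((real S + 1) / 2)"
proof -
  define L where "L = max \<bar>a\<bar> \<bar>b\<bar> + 1"
  define g where "g = (\<lambda>z::real. exp (- lam * z ^ 2) * \<bar>z\<bar> ^ S)"
  have L: "L > 0" unfolding L_def by simp
  have int: "g integrable_on {c..d}" for c d
    unfolding g_def by (intro integrable_continuous_interval continuous_intros)
  have half: "integral {0..L} g = integral {0..L} (\<lambda>z. exp (- lam * z ^ 2) * z ^ S)"
    unfolding g_def by (intro integral_cong) auto
  have "integral {a..b} g \<le> integral {-L..L} g"
    by (intro integral_subset_le int) (auto simp: L_def g_def)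
  also have "\<dots> = integral {-L..0} g + integral {0..L} g"
    using Henstock_Kurzweil_Integration.integral_combine[where a="-L" and c=0 and b=L and f=g] L int
    by simp
  also have "integral {-L..0} g = integral {0..L} g"
    using Henstock_Kurzweil_Integration.integral_reflect_real[of "-0" "-L" g] by (simp add: g_def)
  also have "integral {0..L} g + integral {0..L} g
      \<le> Gamma ((real S + 1) / 2) / lam powr ((real S + 1) / 2)"
    using gaussian_moment_error_bounds(1)[OF lam L, of S] lam unfolding half
    by (simp add: field_simps)
  finally show ?thesis unfolding g_def .
qed

lemma integral_gaussian_moment_reflect:
  fixes lam L :: real
  shows "integral {-L..0} (\<lambda>y. exp (- lam * y ^ 2) * y ^ s)
           = (-1) ^ s * integral {0..L} (\<lambda>y. exp (- lam * y ^ 2) * y ^ s)"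
proof -
  define g where "g = (\<lambda>y::real. exp (- lam * y ^ 2) * y ^ s)"
  have "(-1) ^ s * g (- y) = g y" for y
  proof -
    have "(-1) ^ s * g (- y) = (-1) ^ s * (exp (- lam * y ^ 2) * ((-1) ^ s * y ^ s))"
      by (simp add: g_def power_minus[of y s])
    also have "\<dots> = ((-1) ^ s * (-1) ^ s) * g y"
      unfolding g_def by (simp only: mult_ac)
    also have "(-1::real) ^ s * (-1) ^ s = 1"
      by (simp flip: power_mult_distrib)
    finally show ?thesis by simp
  qed
  hence g_odd_even: "g = (\<lambda>y. (-1) ^ s * g (- y))"
    by simp
  have "integral {-L..0} g = integral {-L..-0} (\<lambda>y. (-1) ^ s * g (- y))"
    by (subst g_odd_even) simp
  also have "\<dots> = integral {0..L} (\<lambda>y. (-1) ^ s * g y)"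
    by (rule Henstock_Kurzweil_Integration.integral_reflect_real)
  finally show ?thesis unfolding g_def by simp
qed

section \<open>Laplace's method\<close>

lemma laplace_integrand_decomposition:
  "exp (of_real (n * ptilde z)) * exp (v * of_real z)
     = (\<Sum>s<S. lagrange_coeff sqrt_exp_quotient_fps (fps_exp v) s
                * of_real (morse_real_deriv z * (exp (- (n / 2) * morse_real z ^ 2) * morse_real z ^ s)))
       + of_real (exp (- (n / 2) * morse_real z ^ 2)) * laplace_remainder v S (of_real z)"
proof -
  have e1: "exp (of_real (n * ptilde z)) = of_real (exp (- (n / 2) * morse_real z ^ 2))"
    by (simp add: ptilde_eq_morse_real exp_of_real[symmetric])
  have e2: "exp (v * of_real z) = laplace_remainder v S (of_real z)
      + (\<Sum>s<S. lagrange_coeff sqrt_exp_quotient_fps (fps_exp v) s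
                 * (of_real (morse_real z) ^ s * of_real (morse_real_deriv z)))"
    by (simp add: laplace_remainder_def morse_of_real deriv_morse_of_real)
  show ?thesis unfolding e1 e2 by (simp add: algebra_simps sum_distrib_left)
qed

lemma has_integral_laplace_split:
  fixes n a b :: real
  assumes ab: "a \<le> b" and u: "morse_real a \<le> morse_real b"
  shows "((\<lambda>z. exp (of_real (n * ptilde z)) * exp (v * of_real z)) has_integral
           (\<Sum>s<S. lagrange_coeff sqrt_exp_quotient_fps (fps_exp v) s
                    * of_real (integral {morse_real a..morse_real b}
                                 (\<lambda>y. exp (- (n / 2) * y ^ 2) * y ^ s)))
           + integral {a..b} (\<lambda>z. of_real (exp (- (n / 2) * morse_real z ^ 2))
                                    * laplace_remainder v S (of_real z))) {a..b}"
proof -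
  let ?c = "lagrange_coeff sqrt_exp_quotient_fps (fps_exp v)"
  let ?g = "\<lambda>s y. exp (- (n / 2) * y ^ 2) * y ^ s"
  have "bounded (morse_real ` {a..b})"
    by (intro compact_imp_bounded compact_continuous_image continuous_on_morse_real compact_Icc)
  then obtain B where "\<forall>y\<in>morse_real ` {a..b}. norm y \<le> B"
    unfolding bounded_iff by blast
  hence B: "morse_real ` {a..b} \<subseteq> {-B..B}" by (auto simp: abs_le_iff)
  have "((\<lambda>z. morse_real_deriv z *\<^sub>R ?g s (morse_real z)) has_integral
           integral {morse_real a..morse_real b} (?g s)) {a..b}" for s
    by (rule has_integral_substitution[OF ab u B])
       (auto intro!: continuous_intros has_field_derivative_at_within morse_real_has_real_derivative)
  hence main: "((\<lambda>z. \<Sum>s<S. ?c s * of_real (morse_real_deriv z * ?g s (morse_real z))) has_integral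
                (\<Sum>s<S. ?c s * of_real (integral {morse_real a..morse_real b} (?g s)))) {a..b}"
    by (intro has_integral_sum finite_lessThan has_integral_mult_right has_integral_of_real) simp
  have "continuous_on {a..b} (\<lambda>z. of_real (exp (- (n / 2) * morse_real z ^ 2))
                                    * laplace_remainder v S (of_real z))"
    by (intro continuous_intros continuous_on_compose2[OF continuous_on_morse_real]
          continuous_on_compose2[OF continuous_on_laplace_remainder]) auto
  hence rem: "((\<lambda>z. of_real (exp (- (n / 2) * morse_real z ^ 2)) * laplace_remainder v S (of_real z))
                has_integral integral {a..b} (\<lambda>z. of_real (exp (- (n / 2) * morse_real z ^ 2))
                                    * laplace_remainder v S (of_real z))) {a..b}"
    by (intro integrable_integral integrable_continuous_interval)
  show ?thesis
    by (intro has_integral_eq[OF _ has_integral_add[OF main rem]])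
       (rule laplace_integrand_decomposition[symmetric])
qed

lemma norm_integral_laplace_remainder_le:
  fixes a b c M n :: real
  assumes n: "n > 0" and c: "c > 0" and M: "M \<ge> 0"
    and lower: "\<And>x. x \<in> {a..b} \<Longrightarrow> c * x ^ 2 \<le> morse_real x ^ 2"
    and bound: "\<And>x. x \<in> {a..b} \<Longrightarrow> norm (laplace_remainder v S (of_real x)) \<le> M * \<bar>x\<bar> ^ S"
  shows "norm (integral {a..b} (\<lambda>z. of_real (exp (- (n / 2) * morse_real z ^ 2))
                                      * laplace_remainder v S (of_real z)))
           \<le> M * (Gamma ((real S + 1) / 2) / (n * c / 2) powr ((real S + 1) / 2))"
proof -
  have "norm (integral {a..b} (\<lambda>z. of_real (exp (- (n / 2) * morse_real z ^ 2))
                                   * laplace_remainder v S (of_real z)))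
        \<le> integral {a..b} (\<lambda>z. M * (exp (- (n * c / 2) * z ^ 2) * \<bar>z\<bar> ^ S))"
  proof (rule integral_norm_bound_integral)
    show "(\<lambda>z. of_real (exp (- (n / 2) * morse_real z ^ 2)) * laplace_remainder v S (of_real z))
            integrable_on {a..b}"
      by (intro integrable_continuous_interval continuous_intros
            continuous_on_compose2[OF continuous_on_morse_real]
            continuous_on_compose2[OF continuous_on_laplace_remainder]) auto
    show "(\<lambda>z. M * (exp (- (n * c / 2) * z ^ 2) * \<bar>z\<bar> ^ S)) integrable_on {a..b}"
      by (intro integrable_continuous_interval continuous_intros)
    fix z assume z: "z \<in> {a..b}"
    have "n * c / 2 * z ^ 2 \<le> n / 2 * morse_real z ^ 2"
      using lower[OF z] n by (simp add: mult.assoc mult_left_mono)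
    hence "exp (- (n / 2) * morse_real z ^ 2) \<le> exp (- (n * c / 2) * z ^ 2)" by simp
    hence "exp (- (n / 2) * morse_real z ^ 2) * norm (laplace_remainder v S (of_real z))
            \<le> exp (- (n * c / 2) * z ^ 2) * (M * \<bar>z\<bar> ^ S)"
      using bound[OF z] by (intro mult_mono) auto
    thus "norm (of_real (exp (- (n / 2) * morse_real z ^ 2)) * laplace_remainder v S (of_real z))
            \<le> M * (exp (- (n * c / 2) * z ^ 2) * \<bar>z\<bar> ^ S)"
      by (simp add: norm_mult mult_ac)
  qed
  also have "\<dots> = M * integral {a..b} (\<lambda>z. exp (- (n * c / 2) * z ^ 2) * \<bar>z\<bar> ^ S)"
    by simp
  also have "\<dots> \<le> M * (Gamma ((real S + 1) / 2) / (n * c / 2) powr ((real S + 1) / 2))"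
    using n c M by (intro mult_left_mono integral_gaussian_abs_moment_le) auto
  finally show ?thesis .
qed

lemma laplace_remainder_integral_bigo:
  "(\<lambda>n::nat. norm (integral {a..b} (\<lambda>z. of_real (exp (- (real n / 2) * morse_real z ^ 2))
                                          * laplace_remainder v S (of_real z))))
     \<in> O(\<lambda>n. 1 / real n powr ((real S + 1) / 2))"
proof -
  define A where "A = (real S + 1) / 2"
  obtain c where c: "c > 0" and lower: "\<And>x. x \<in> {a..b} \<Longrightarrow> c * x ^ 2 \<le> morse_real x ^ 2"
    using morse_real_sq_lower_bound[of "{a..b}"] by auto
  obtain M0 where M0: "\<And>x. x \<in> {a..b} \<Longrightarrow> norm (laplace_remainder v S (of_real x)) \<le> M0 * \<bar>x\<bar> ^ S"
    using laplace_remainder_bound[of a b v S] by blast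
  define M where "M = max M0 0"
  have M: "norm (laplace_remainder v S (of_real x)) \<le> M * \<bar>x\<bar> ^ S" if "x \<in> {a..b}" for x
    by (rule order.trans[OF M0[OF that]]) (simp add: M_def mult_right_mono)
  have "norm (integral {a..b} (\<lambda>z. of_real (exp (- (real n / 2) * morse_real z ^ 2))
                                   * laplace_remainder v S (of_real z)))
        \<le> M * Gamma A * (2 / c) powr A * norm (1 / real n powr A)" if n: "n \<ge> 1" for n :: nat
  proof -
    have "(real n * c / 2) powr A = real n powr A / (2 / c) powr A"
      using c by (simp add: powr_mult[symmetric] powr_divide)
    thus ?thesis
      using norm_integral_laplace_remainder_le[of "real n" c M a b v S] n c lower M
      unfolding A_def by (simp add: M_def)
  qed
  thus ?thesis
    unfolding A_def[symmetric] by (intro bigoI eventually_sequentiallyI[of 1]) simp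
qed

text \<open>\<open>\<sigma> = 1\<close> when \<open>y = morse_real z\<close> maps \<open>[a, b]\<close> onto \<open>[0, L]\<close>, and \<open>\<sigma> = -1\<close> when it maps
  it onto \<open>[-L, 0]\<close>.\<close>
lemma laplace_integral_error_eq:
  fixes a b L \<sigma> :: real and n :: nat
  assumes ab: "a \<le> b" "morse_real a \<le> morse_real b"
    and ends: "\<And>lam s. integral {morse_real a..morse_real b} (\<lambda>y. exp (- lam * y ^ 2) * y ^ s)
                        = \<sigma> ^ s * integral {0..L} (\<lambda>y. exp (- lam * y ^ 2) * y ^ s)"
  shows "integral {a..b} (\<lambda>z. exp (of_real (real n * ptilde z)) * exp (v * of_real z))
           - (\<Sum>s<S. of_real (Gamma ((real s + 1) / 2) / real n powr ((real s + 1) / 2))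
                     * of_real \<sigma> ^ s * beta_tilde s v)
         = (\<Sum>s<S. lagrange_coeff sqrt_exp_quotient_fps (fps_exp v) s * of_real \<sigma> ^ s
                   * of_real (integral {0..L} (\<lambda>y. exp (- (real n / 2) * y ^ 2) * y ^ s)
                     - 2 powr ((real s - 1) / 2) * Gamma ((real s + 1) / 2)
                         / real n powr ((real s + 1) / 2)))
           + integral {a..b} (\<lambda>z. of_real (exp (- (real n / 2) * morse_real z ^ 2))
                                    * laplace_remainder v S (of_real z))"
    (is "?lhs = (\<Sum>s<S. ?c s * of_real \<sigma> ^ s * of_real (?J s - ?m s)) + ?R")
proof -
  have I: "integral {a..b} (\<lambda>z. exp (of_real (real n * ptilde z)) * exp (v * of_real z))
      = (\<Sum>s<S. ?c s * of_real (\<sigma> ^ s * ?J s)) + ?R"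
    using integral_unique[OF has_integral_laplace_split[OF ab, of "real n" v S]] by (simp only: ends)
  have "(\<Sum>s<S. ?c s * of_real (\<sigma> ^ s * ?J s))
      - (\<Sum>s<S. of_real (Gamma ((real s + 1) / 2) / real n powr ((real s + 1) / 2))
                   * of_real \<sigma> ^ s * beta_tilde s v)
      = (\<Sum>s<S. ?c s * of_real \<sigma> ^ s * of_real (?J s - ?m s))"
    unfolding sum_subtractf[symmetric] beta_tilde_eq_lagrange_coeff
    by (intro sum.cong refl) (simp add: algebra_simps)
  thus ?thesis
    unfolding I by (simp add: algebra_simps)
qed

lemma laplace_integral_expansion:
  fixes a b L \<sigma> :: real
  assumes ab: "a \<le> b" "morse_real a \<le> morse_real b" and L: "L > 0"
    and ends: "\<And>lam s. integral {morse_real a..morse_real b} (\<lambda>y. exp (- lam * y ^ 2) * y ^ s)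
                        = \<sigma> ^ s * integral {0..L} (\<lambda>y. exp (- lam * y ^ 2) * y ^ s)"
  shows "(\<lambda>n::nat. norm (integral {a..b} (\<lambda>z. exp (of_real (real n * ptilde z)) * exp (v * of_real z))
           - (\<Sum>s<S. of_real (Gamma ((real s + 1) / 2) / real n powr ((real s + 1) / 2))
                     * of_real \<sigma> ^ s * beta_tilde s v)))
         \<in> O(\<lambda>n. 1 / real n powr ((real S + 1) / 2))"
proof -
  let ?c = "lagrange_coeff sqrt_exp_quotient_fps (fps_exp v)"
  let ?J = "\<lambda>s (n::nat). integral {0..L} (\<lambda>y. exp (- (real n / 2) * y ^ 2) * y ^ s)"
  let ?m = "\<lambda>s (n::nat).
    2 powr ((real s - 1) / 2) * Gamma ((real s + 1) / 2) / real n powr ((real s + 1) / 2)"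
  let ?R = "\<lambda>n::nat. integral {a..b} (\<lambda>z. of_real (exp (- (real n / 2) * morse_real z ^ 2))
                                          * laplace_remainder v S (of_real z))"
  define B where "B = (\<lambda>n. (\<Sum>s<S. norm (?c s * of_real \<sigma> ^ s) * \<bar>?J s n - ?m s n\<bar>) + norm (?R n))"
  have B_bigo: "B \<in> O(\<lambda>n. 1 / real n powr ((real S + 1) / 2))"
    unfolding B_def using gaussian_moment_bigo[OF L]
    by (intro sum_in_bigo big_sum_in_bigo laplace_remainder_integral_bigo)
       (simp only: cmult_in_bigo_iff landau_o.big.abs_in_iff simp_thms)
  have le: "norm (integral {a..b} (\<lambda>z. exp (of_real (real n * ptilde z)) * exp (v * of_real z))
           - (\<Sum>s<S. of_real (Gamma ((real s + 1) / 2) / real n powr ((real s + 1) / 2))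
                     * of_real \<sigma> ^ s * beta_tilde s v)) \<le> B n" for n :: nat
    unfolding laplace_integral_error_eq[OF ab ends] B_def
    by (rule order.trans[OF norm_triangle_ineq add_right_mono[OF order.trans[OF norm_sum sum_mono]]])
       (simp only: norm_mult norm_of_real order_refl)
  have "(\<lambda>n::nat. norm (integral {a..b} (\<lambda>z. exp (of_real (real n * ptilde z)) * exp (v * of_real z))
           - (\<Sum>s<S. of_real (Gamma ((real s + 1) / 2) / real n powr ((real s + 1) / 2))
                     * of_real \<sigma> ^ s * beta_tilde s v))) \<in> O(B)"
    by (intro landau_o.big_mono always_eventually allI)
       (simp only: real_norm_def abs_norm_cancel, rule order.trans[OF le abs_ge_self])
  thus ?thesis using B_bigo by (rule landau_o.big_trans)
qed

theorem proposition6p2: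
  fixes v :: complex and S :: nat
  assumes "S \<ge> 1"
  shows "(\<lambda>n::nat. norm (integral {-2..0::real}
             (\<lambda>z. exp (complex_of_real (real n * ptilde z)) * exp (v * complex_of_real z))
           - (\<Sum>s<S. complex_of_real (Gamma ((real s + 1) / 2) / real n powr ((real s + 1) / 2))
                     * (-1) ^ s * beta_tilde s v)))
         \<in> O(\<lambda>n. 1 / real n powr ((real S + 1) / 2))
       \<and> (\<lambda>n::nat. norm (integral {0..2::real}
             (\<lambda>z. exp (complex_of_real (real n * ptilde z)) * exp (v * complex_of_real z))
           - (\<Sum>s<S. complex_of_real (Gamma ((real s + 1) / 2) / real n powr ((real s + 1) / 2))
                     * beta_tilde s v)))
         \<in> O(\<lambda>n. 1 / real n powr ((real S + 1) / 2))"
proof -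
  have u: "morse_real 0 = 0" "morse_real (-2) < 0" "morse_real 2 > 0"
    using sgn_morse_real[of 0] sgn_morse_real[of "-2"] sgn_morse_real[of 2]
    by (auto simp: sgn_real_def split: if_splits)
  have left: "integral {morse_real (-2)..morse_real 0} (\<lambda>y. exp (- lam * y ^ 2) * y ^ s)
      = (-1) ^ s * integral {0..- morse_real (-2)} (\<lambda>y. exp (- lam * y ^ 2) * y ^ s)" for lam s
    using integral_gaussian_moment_reflect[where lam=lam and L="- morse_real (-2)" and s=s]
    by (simp add: u)
  have right: "integral {morse_real 0..morse_real 2} (\<lambda>y. exp (- lam * y ^ 2) * y ^ s)
      = 1 ^ s * integral {0..morse_real 2} (\<lambda>y. exp (- lam * y ^ 2) * y ^ s)" for lam s
    by (simp add: u)
  show ?thesis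
    using laplace_integral_expansion[OF _ _ _ left, where v=v and S=S]
      laplace_integral_expansion[OF _ _ _ right, where v=v and S=S] u
    by simp
qed

end
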